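(* In the standing setting, let $(A,B,R,\sigma)$ be a normalized context. If $(\chi_X,\chi_Y)\in\mathcal{FC}$ with $\varnothing\ne X\subsetneq B$ and $\varnothing\ne Y\subsetneq A$, then $(\chi_{B\setminus X},\chi_{A\setminus Y})\in\mathcal{FC}$.
   Context: Adjoint triple: for posets $(P_1,\le_1),(P_2,\le_2),(P_3,\le_3)$, maps $\&\colon P_1\times P_2\to P_3$, $\swarrow\colon P_3\times P_2\to P_1$, $\nwarrow\colon P_3\times P_1\to P_2$ with $x\le_1 z\swarrow y \iff x\,\&\,y\le_3 z \iff y\le_2 z\nwarrow x$ for all $x,y,z$. For lower-bounded posets, $\&$ has zero-divisors if there are $x\ne\bot_1$, $y\neq\bot_2$ with $x\,\&\,y=\bot_3$. Standing setting: $(L_1,\preceq_1,\bot_1,\top_1)$ and $(L_2,\preceq_2,\bot_2,\top_2)$ are complete lattices and $(P,\le,\bot,\top)$ is a bounded poset. A multi-adjoint frame consists of adjoint triples $(\&_i,\swarrow^i,\nwarrow_i)$, $i=1,\dots,n$, with respect to $L_1,L_2,P$; a property-oriented frame consists of adjoint triples $(\&^p_j,\swarrow_p^j,\nwarrow^p_j)$, $j=1,\dots,m$, with respect to $P,L_2,L_1$; an object-oriented frame consists of adjoint triples $(\&^o_k,\swarrow_o^k,\nwarrow^o_k)$, $k=1,\dots,s$, with respect to $L_1,P,L_2$. All conjunctors $\&_i,\&^p_j,\&^o_k$ have no zero-divisors. A context $(A,B,R,\sigma)$ consists of non-empty sets $A,B$, $R\colon A\times B\to P$, and maps $\sigma,\sigma_p,\sigma_o$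 from $A\times B$ to the index sets of the three frames. It is normalized if every $a\in A$ has $b_1,b_2\in B$ with $R(a,b_1)\ne\bot$, $R(a,b_2)=\bot$, and every $b\in B$ has $a_1,a_2\in A$ with $R(a_1,b)\neq\bot$, $R(a_2,b)=\bot$. Fuzzy necessity operators: $g^{\uparrow_N}(a)=\inf\{g(b)\swarrow_o^{\sigma_o(a,b)}R(a,b)\mid b\in B\}$ for $g\in L_2^B$, and $f^{\downarrow^N}(b)=\inf\{f(a)\nwarrow^p_{\sigma_p(a,b)}R(a,b)\mid a\in A\}$ for $f\in L_1^A$. $\mathcal F_N=\{(g,f)\mid g\in L_2^B,\ f\in L_1^A,\ g^{\uparrow_N}=f,\ f^{\downarrow^N}=g\}$. For $X\subseteq B$, $\chi_X\in L_2^B$ takes value $\top_2$ on $X$ and $\bot_2$ elsewhere; for $Y\subseteq A$, $\chi_Y\in L_1^A$ takes value $\top_1$ on $Y$ and $\bot_1$ elsewhere. $\mathcal{FC}=\{(\chi_X,\chi_Y)\in\mathcal F_N\mid \varnothing\ne X\subsetneq B,\ \varnothing\neq Y\subsetneq A\}$. *)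

theory Defs
  imports Main
begin

definition adjoint_triple ::
  "('p1::order \<Rightarrow> 'p2::order \<Rightarrow> 'p3::order) \<Rightarrow> ('p3 \<Rightarrow> 'p2 \<Rightarrow> 'p1) \<Rightarrow> ('p3 \<Rightarrow> 'p1 \<Rightarrow> 'p2) \<Rightarrow> bool"
  where "adjoint_triple cj sw nw \<longleftrightarrow>
    (\<forall>x y z. (x \<le> sw z y \<longleftrightarrow> cj x y \<le> z) \<and> (cj x y \<le> z \<longleftrightarrow> y \<le> nw z x))"

definition has_zero_divisors ::
  "('p1::order_bot \<Rightarrow> 'p2::order_bot \<Rightarrow> 'p3::order_bot) \<Rightarrow> bool"
  where "has_zero_divisors cj \<longleftrightarrow> (\<exists>x y. x \<noteq> bot \<and> y \<noteq> bot \<and> cj x y = bot)"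

text \<open>Normalized context; A and B are the (non-empty) types 'a and 'b.\<close>
definition normalized_context :: "('a \<Rightarrow> 'b \<Rightarrow> 'p::bot) \<Rightarrow> bool"
  where "normalized_context R \<longleftrightarrow>
    (\<forall>a. (\<exists>b1. R a b1 \<noteq> bot) \<and> (\<exists>b2. R a b2 = bot)) \<and>
    (\<forall>b. (\<exists>a1. R a1 b \<noteq> bot) \<and> (\<exists>a2. R a2 b = bot))"

definition nec_up ::
  "('k \<Rightarrow> 'l2 \<Rightarrow> 'p \<Rightarrow> 'l1::complete_lattice) \<Rightarrow> ('a \<Rightarrow> 'b \<Rightarrow> 'p) \<Rightarrow> ('a \<Rightarrow> 'b \<Rightarrow> 'k)
    \<Rightarrow> ('b \<Rightarrow> 'l2) \<Rightarrow> ('a \<Rightarrow> 'l1)"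
  where "nec_up swo R \<sigma>o g = (\<lambda>a. INF b. swo (\<sigma>o a b) (g b) (R a b))"

definition nec_down ::
  "('j \<Rightarrow> 'l1 \<Rightarrow> 'p \<Rightarrow> 'l2::complete_lattice) \<Rightarrow> ('a \<Rightarrow> 'b \<Rightarrow> 'p) \<Rightarrow> ('a \<Rightarrow> 'b \<Rightarrow> 'j)
    \<Rightarrow> ('a \<Rightarrow> 'l1) \<Rightarrow> ('b \<Rightarrow> 'l2)"
  where "nec_down nwp R \<sigma>p f = (\<lambda>b. INF a. nwp (\<sigma>p a b) (f a) (R a b))"

definition FN ::
  "('k \<Rightarrow> 'l2::complete_lattice \<Rightarrow> 'p \<Rightarrow> 'l1::complete_lattice) \<Rightarrow> ('j \<Rightarrow> 'l1 \<Rightarrow> 'p \<Rightarrow> 'l2)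
    \<Rightarrow> ('a \<Rightarrow> 'b \<Rightarrow> 'p) \<Rightarrow> ('a \<Rightarrow> 'b \<Rightarrow> 'j) \<Rightarrow> ('a \<Rightarrow> 'b \<Rightarrow> 'k)
    \<Rightarrow> (('b \<Rightarrow> 'l2) \<times> ('a \<Rightarrow> 'l1)) set"
  where "FN swo nwp R \<sigma>p \<sigma>o =
    {(g, f). nec_up swo R \<sigma>o g = f \<and> nec_down nwp R \<sigma>p f = g}"

definition chi :: "'x set \<Rightarrow> 'x \<Rightarrow> 'l::{bot,top}"
  where "chi X = (\<lambda>x. if x \<in> X then top else bot)"

definition FC ::
  "('k \<Rightarrow> 'l2::complete_lattice \<Rightarrow> 'p \<Rightarrow> 'l1::complete_lattice) \<Rightarrow> ('j \<Rightarrow> 'l1 \<Rightarrow> 'p \<Rightarrow> 'l2)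
    \<Rightarrow> ('a \<Rightarrow> 'b \<Rightarrow> 'p) \<Rightarrow> ('a \<Rightarrow> 'b \<Rightarrow> 'j) \<Rightarrow> ('a \<Rightarrow> 'b \<Rightarrow> 'k)
    \<Rightarrow> (('b \<Rightarrow> 'l2) \<times> ('a \<Rightarrow> 'l1)) set"
  where "FC swo nwp R \<sigma>p \<sigma>o =
    {(chi X, chi Y) | X Y. (chi X, chi Y) \<in> FN swo nwp R \<sigma>p \<sigma>o
        \<and> X \<noteq> {} \<and> X \<noteq> UNIV \<and> Y \<noteq> {} \<and> Y \<noteq> UNIV}"

end

theory Submission
  imports Defs
begin

text \<open>With no zero-divisors, the residua send crisp arguments to crisp values, so on
  characteristic functions the fuzzy necessity operators are the classical necessity operators
  of the crisp relation \<open>R a b \<noteq> \<bottom>\<close>.  For a classical concept \<open>(X, Y)\<close> of a relation in which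
  every object and every attribute has a neighbour, an object outside \<open>Y\<close> can only be related
  to attributes outside \<open>X\<close> (otherwise that attribute would force it into \<open>Y\<close>), and an object all
  of whose neighbours lie outside \<open>X\<close> cannot be in \<open>Y\<close>, since it has some neighbour; dually for
  attributes.  Hence the complements form a concept again.  When the lattices are trivial all
  characteristic functions coincide and there is nothing to prove.\<close>

lemma adjoint_triple_sw_iff:
  "adjoint_triple cj sw nw \<Longrightarrow> x \<le> sw z y \<longleftrightarrow> cj x y \<le> z"
  unfolding adjoint_triple_def by blast

lemma adjoint_triple_nw_iff:
  "adjoint_triple cj sw nw \<Longrightarrow> y \<le> nw z x \<longleftrightarrow> cj x y \<le> z"
  unfolding adjoint_triple_def by blast

context
  fixes cj :: "'p1::{order_bot,order_top} \<Rightarrow> 'p2::{order_bot,order_top} \<Rightarrow> 'p3::{order_bot,order_top}"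
    and sw :: "'p3 \<Rightarrow> 'p2 \<Rightarrow> 'p1"
    and nw :: "'p3 \<Rightarrow> 'p1 \<Rightarrow> 'p2"
  assumes adj: "adjoint_triple cj sw nw"
begin

lemma adjoint_triple_sw_top: "sw top y = top"
  using adjoint_triple_sw_iff[OF adj, of top top y] by (simp add: top_unique)

lemma adjoint_triple_nw_top: "nw top x = top"
  using adjoint_triple_nw_iff[OF adj, of top top x] by (simp add: top_unique)

lemma adjoint_triple_sw_bot_right: "sw z bot = top"
  using adjoint_triple_sw_iff[OF adj, of top z bot] adjoint_triple_nw_iff[OF adj, of bot z top]
  by (simp add: top_unique)

lemma adjoint_triple_nw_bot_right: "nw z bot = top"
  using adjoint_triple_nw_iff[OF adj, of top z bot] adjoint_triple_sw_iff[OF adj, of bot z top]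
  by (simp add: top_unique)

lemma adjoint_triple_sw_bot_left:
  assumes "\<not> has_zero_divisors cj" and "y \<noteq> bot"
  shows "sw bot y = bot"
proof -
  have "cj (sw bot y) y = bot"
    using adjoint_triple_sw_iff[OF adj, of "sw bot y" bot y] by (simp add: bot_unique)
  with assms show ?thesis unfolding has_zero_divisors_def by blast
qed

lemma adjoint_triple_nw_bot_left:
  assumes "\<not> has_zero_divisors cj" and "x \<noteq> bot"
  shows "nw bot x = bot"
proof -
  have "cj x (nw bot x) = bot"
    using adjoint_triple_nw_iff[OF adj, of "nw bot x" bot x] by (simp add: bot_unique)
  with assms show ?thesis unfolding has_zero_divisors_def by blast
qed

lemma adjoint_triple_sw_trivial:
  assumes "\<not> has_zero_divisors cj" and "(y::'p2) \<noteq> bot" and "(top::'p3) = bot"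
  shows "(top::'p1) = bot"
  using adjoint_triple_sw_top[of y] adjoint_triple_sw_bot_left[OF assms(1,2)] assms(3) by simp

lemma adjoint_triple_nw_trivial:
  assumes "\<not> has_zero_divisors cj" and "(x::'p1) \<noteq> bot" and "(top::'p3) = bot"
  shows "(top::'p2) = bot"
  using adjoint_triple_nw_top[of x] adjoint_triple_nw_bot_left[OF assms(1,2)] assms(3) by simp

end

lemma chi_eq_iff:
  assumes "(top::'l::{bot,top}) \<noteq> bot"
  shows "(chi S :: 'x \<Rightarrow> 'l) = chi T \<longleftrightarrow> S = T"
proof
  assume "(chi S :: 'x \<Rightarrow> 'l) = chi T"
  then have "(if x \<in> S then top else bot :: 'l) = (if x \<in> T then top else bot)" for x
    unfolding chi_def by metis
  with assms show "S = T" by (metis (full_types) set_eqI)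
qed simp

lemma chi_eq_if_trivial:
  "(top::'l::{order_bot,order_top}) = bot \<Longrightarrow> (chi S :: 'x \<Rightarrow> 'l) = chi T"
  unfolding chi_def by auto

definition crisp_up :: "('a \<Rightarrow> 'b \<Rightarrow> bool) \<Rightarrow> 'b set \<Rightarrow> 'a set"
  where "crisp_up r X = {a. \<forall>b. r a b \<longrightarrow> b \<in> X}"

definition crisp_down :: "('a \<Rightarrow> 'b \<Rightarrow> bool) \<Rightarrow> 'a set \<Rightarrow> 'b set"
  where "crisp_down r Y = {b. \<forall>a. r a b \<longrightarrow> a \<in> Y}"

lemma crisp_concept_Compl:
  assumes obj: "\<And>a. \<exists>b. r a b" and attr: "\<And>b. \<exists>a. r a b"
    and up: "crisp_up r X = Y" and down: "crisp_down r Y = X"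
  shows "crisp_up r (- X) = - Y" and "crisp_down r (- Y) = - X"
proof -
  have Y: "a \<in> Y \<longleftrightarrow> (\<forall>b. r a b \<longrightarrow> b \<in> X)" for a
    using up unfolding crisp_up_def by blast
  have X: "b \<in> X \<longleftrightarrow> (\<forall>a. r a b \<longrightarrow> a \<in> Y)" for b
    using down unfolding crisp_down_def by blast
  show "crisp_up r (- X) = - Y"
  proof (intro set_eqI iffI)
    fix a assume "a \<in> crisp_up r (- X)"
    moreover obtain b where "r a b" using obj by blast
    ultimately show "a \<in> - Y" unfolding crisp_up_def using Y by blast
  qed (auto simp: crisp_up_def X)
  show "crisp_down r (- Y) = - X"
  proof (intro set_eqI iffI)
    fix b assume "b \<in> crisp_down r (- Y)"
    moreover obtain a where "r a b" using attr by blast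
    ultimately show "b \<in> - X" unfolding crisp_down_def using X by blast
  qed (auto simp: crisp_down_def Y)
qed

lemma INF_chi: "(INF x. (chi S x :: 'l::complete_lattice)) = (if S = UNIV then top else bot)"
proof (cases "S = UNIV")
  case False
  then obtain x where "x \<notin> S" by blast
  then have "(INF x. (chi S x :: 'l)) \<le> bot"
    using INF_lower[of x UNIV "chi S"] by (simp add: chi_def)
  with False show ?thesis by (simp add: bot_unique)
qed (simp add: chi_def)

lemma nec_up_chi:
  fixes swo :: "'k \<Rightarrow> 'l2::complete_lattice \<Rightarrow> 'p::{order_bot,order_top} \<Rightarrow> 'l1::complete_lattice"
  assumes adj: "\<And>k. adjoint_triple (conjo k) (swo k) (nwo k)"
    and nzd: "\<And>k. \<not> has_zero_divisors (conjo k)"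
  shows "nec_up swo R \<sigma>o (chi X) = chi (crisp_up (\<lambda>a b. R a b \<noteq> bot) X)"
proof
  fix a
  have "swo (\<sigma>o a b) (chi X b) (R a b) = chi {b. R a b \<noteq> bot \<longrightarrow> b \<in> X} b" for b
    using adjoint_triple_sw_top[OF adj] adjoint_triple_sw_bot_right[OF adj]
      adjoint_triple_sw_bot_left[OF adj nzd]
    unfolding chi_def by auto
  then have "nec_up swo R \<sigma>o (chi X) a = (INF b. chi {b. R a b \<noteq> bot \<longrightarrow> b \<in> X} b)"
    unfolding nec_up_def by simp
  then show "nec_up swo R \<sigma>o (chi X) a = chi (crisp_up (\<lambda>a b. R a b \<noteq> bot) X) a"
    unfolding INF_chi crisp_up_def by (auto simp: chi_def)
qed

lemma nec_down_chi:
  fixes nwp :: "'j \<Rightarrow> 'l1::complete_lattice \<Rightarrow> 'p::{order_bot,order_top} \<Rightarrow> 'l2::complete_lattice"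
  assumes adj: "\<And>j. adjoint_triple (conjp j) (swp j) (nwp j)"
    and nzd: "\<And>j. \<not> has_zero_divisors (conjp j)"
  shows "nec_down nwp R \<sigma>p (chi Y) = chi (crisp_down (\<lambda>a b. R a b \<noteq> bot) Y)"
proof
  fix b
  have "nwp (\<sigma>p a b) (chi Y a) (R a b) = chi {a. R a b \<noteq> bot \<longrightarrow> a \<in> Y} a" for a
    using adjoint_triple_nw_top[OF adj] adjoint_triple_nw_bot_right[OF adj]
      adjoint_triple_nw_bot_left[OF adj nzd]
    unfolding chi_def by auto
  then have "nec_down nwp R \<sigma>p (chi Y) b = (INF a. chi {a. R a b \<noteq> bot \<longrightarrow> a \<in> Y} a)"
    unfolding nec_down_def by simp
  then show "nec_down nwp R \<sigma>p (chi Y) b = chi (crisp_down (\<lambda>a b. R a b \<noteq> bot) Y) b"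
    unfolding INF_chi crisp_down_def by (auto simp: chi_def)
qed

lemma FN_chi_iff:
  fixes swo :: "'k \<Rightarrow> 'l2::complete_lattice \<Rightarrow> 'p::{order_bot,order_top} \<Rightarrow> 'l1::complete_lattice"
    and nwp :: "'j \<Rightarrow> 'l1 \<Rightarrow> 'p \<Rightarrow> 'l2"
  assumes "\<And>j. adjoint_triple (conjp j) (swp j) (nwp j)" "\<And>j. \<not> has_zero_divisors (conjp j)"
    and "\<And>k. adjoint_triple (conjo k) (swo k) (nwo k)" "\<And>k. \<not> has_zero_divisors (conjo k)"
    and "(top::'l1) \<noteq> bot" "(top::'l2) \<noteq> bot"
  shows "(chi X, chi Y) \<in> FN swo nwp R \<sigma>p \<sigma>o \<longleftrightarrow>
    crisp_up (\<lambda>a b. R a b \<noteq> bot) X = Y \<and> crisp_down (\<lambda>a b. R a b \<noteq> bot) Y = X"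
  unfolding FN_def
  by (simp add: nec_up_chi[OF assms(3,4)] nec_down_chi[OF assms(1,2)] chi_eq_iff[OF assms(5)]
      chi_eq_iff[OF assms(6)])

lemma FC_subset_FN: "FC swo nwp R \<sigma>p \<sigma>o \<subseteq> FN swo nwp R \<sigma>p \<sigma>o"
  unfolding FC_def by blast

lemma FC_chiI:
  "(chi X, chi Y) \<in> FN swo nwp R \<sigma>p \<sigma>o \<Longrightarrow> X \<noteq> {} \<Longrightarrow> X \<noteq> UNIV \<Longrightarrow> Y \<noteq> {} \<Longrightarrow> Y \<noteq> UNIV
    \<Longrightarrow> (chi X, chi Y) \<in> FC swo nwp R \<sigma>p \<sigma>o"
  unfolding FC_def by blast

theorem mainTheorem7:
  fixes cj :: "'i::finite \<Rightarrow> 'l1::complete_lattice \<Rightarrow> 'l2::complete_lattice \<Rightarrow> 'p::{order_bot,order_top}"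
    and sw :: "'i \<Rightarrow> 'p \<Rightarrow> 'l2 \<Rightarrow> 'l1"
    and nw :: "'i \<Rightarrow> 'p \<Rightarrow> 'l1 \<Rightarrow> 'l2"
    and conjp :: "'j::finite \<Rightarrow> 'p \<Rightarrow> 'l2 \<Rightarrow> 'l1"
    and swp :: "'j \<Rightarrow> 'l1 \<Rightarrow> 'l2 \<Rightarrow> 'p"
    and nwp :: "'j \<Rightarrow> 'l1 \<Rightarrow> 'p \<Rightarrow> 'l2"
    and conjo :: "'k::finite \<Rightarrow> 'l1 \<Rightarrow> 'p \<Rightarrow> 'l2"
    and swo :: "'k \<Rightarrow> 'l2 \<Rightarrow> 'p \<Rightarrow> 'l1"
    and nwo :: "'k \<Rightarrow> 'l2 \<Rightarrow> 'l1 \<Rightarrow> 'p"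
    and R :: "'a \<Rightarrow> 'b \<Rightarrow> 'p"
    and \<sigma> :: "'a \<Rightarrow> 'b \<Rightarrow> 'i"
    and \<sigma>p :: "'a \<Rightarrow> 'b \<Rightarrow> 'j"
    and \<sigma>o :: "'a \<Rightarrow> 'b \<Rightarrow> 'k"
    and X :: "'b set" and Y :: "'a set"
  assumes multif: "\<And>i. adjoint_triple (cj i) (sw i) (nw i)"
    and propf: "\<And>j. adjoint_triple (conjp j) (swp j) (nwp j)"
    and objf: "\<And>k. adjoint_triple (conjo k) (swo k) (nwo k)"
    and nzd: "\<And>i. \<not> has_zero_divisors (cj i)"
    and nzdp: "\<And>j. \<not> has_zero_divisors (conjp j)"
    and nzdo: "\<And>k. \<not> has_zero_divisors (conjo k)"
    and norm: "normalized_context R"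
    and XY: "(chi X, chi Y) \<in> FC swo nwp R \<sigma>p \<sigma>o"
    and X: "X \<noteq> {}" "X \<noteq> UNIV"
    and Y: "Y \<noteq> {}" "Y \<noteq> UNIV"
  shows "(chi (- X), chi (- Y)) \<in> FC swo nwp R \<sigma>p \<sigma>o"
proof -
  let ?r = "\<lambda>a b. R a b \<noteq> bot"
  have FN: "(chi X, chi Y) \<in> FN swo nwp R \<sigma>p \<sigma>o"
    using XY FC_subset_FN by blast
  have serial: "\<And>a. \<exists>b. R a b \<noteq> bot" "\<And>b. \<exists>a. R a b \<noteq> bot"
    using norm unfolding normalized_context_def by blast+
  then obtain a0 b0 where R0: "R a0 b0 \<noteq> bot" by blast
  have "(chi (- X), chi (- Y)) \<in> FN swo nwp R \<sigma>p \<sigma>o"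
  proof (cases "(top::'l1) = bot")
    case True
    then have "(top::'l2) = bot"
      using adjoint_triple_nw_trivial[OF propf nzdp R0] by blast
    then have "(chi (- X) :: 'b \<Rightarrow> 'l2) = chi X" by (rule chi_eq_if_trivial)
    moreover have "(chi (- Y) :: 'a \<Rightarrow> 'l1) = chi Y" using True by (rule chi_eq_if_trivial)
    ultimately show ?thesis using FN by simp
  next
    case False
    then have "(top::'l2) \<noteq> bot"
      using adjoint_triple_sw_trivial[OF objf nzdo R0] by blast
    note FN_chi = FN_chi_iff[OF propf nzdp objf nzdo False this]
    from FN have "crisp_up ?r X = Y" and "crisp_down ?r Y = X"
      unfolding FN_chi by simp_all
    from crisp_concept_Compl[OF serial this] show ?thesis
      unfolding FN_chi by blast
  qed
  then show ?thesis
    using X Y by (intro FC_chiI) auto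
qed

end
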